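(* Let $H$ be a graph, $K$ a clique of $H$, and $x$ a vertex of $H$ not in $K$ that is adjacent to all vertices of $K$, such that all vertices of $K$ have the same closed neighborhood in $H-x$. For $0\le i\le |K|$, let $H_i$ be the graph obtained from $H$ by removing $i$ of the edges between $x$ and $K$. Then \[ (i-j)X_{H_k}+(j-k)X_{H_i}+(k-i)X_{H_j}=0\qquad\text{for any } 0\le i\le j\le k\le |K|. \]
   Context: All graphs are finite simple graphs. The chromatic symmetric function of a graph $G$ is $X_G=\sum_{\kappa}\prod_{v\in V(G)}x_{\kappa(v)}$, where $\kappa$ ranges over proper colorings $\kappa:V(G)\to\{1,2,\dots\}$. A clique is a set of pairwise adjacent vertices. The closed neighborhood of a vertex is the set consisting of the vertex and all vertices adjacent to it. *)

theory Defs
  imports Main "HOL-Library.FuncSet"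
begin

definition simple_graph :: "'a set \<Rightarrow> 'a set set \<Rightarrow> bool" where
  "simple_graph V E \<longleftrightarrow> finite V \<and> (\<forall>e\<in>E. \<exists>u v. u \<noteq> v \<and> u \<in> V \<and> v \<in> V \<and> e = {u, v})"

definition adj :: "'a set set \<Rightarrow> 'a \<Rightarrow> 'a \<Rightarrow> bool" where
  "adj E u v \<longleftrightarrow> u \<noteq> v \<and> {u, v} \<in> E"

definition is_clique :: "'a set \<Rightarrow> 'a set set \<Rightarrow> 'a set \<Rightarrow> bool" where
  "is_clique V E K \<longleftrightarrow> K \<subseteq> V \<and> (\<forall>u\<in>K. \<forall>v\<in>K. u \<noteq> v \<longrightarrow> adj E u v)"

definition del_vertex_E :: "'a set set \<Rightarrow> 'a \<Rightarrow> 'a set set" where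
  "del_vertex_E E x = {e \<in> E. x \<notin> e}"

definition closed_nbhd :: "'a set \<Rightarrow> 'a set set \<Rightarrow> 'a \<Rightarrow> 'a set" where
  "closed_nbhd V E v = insert v {u \<in> V. adj E u v}"

definition proper_coloring :: "'a set \<Rightarrow> 'a set set \<Rightarrow> ('a \<Rightarrow> nat) \<Rightarrow> bool" where
  "proper_coloring V E \<kappa> \<longleftrightarrow> \<kappa> \<in> extensional V \<and> (\<forall>v\<in>V. 1 \<le> \<kappa> v)
     \<and> (\<forall>u\<in>V. \<forall>v\<in>V. adj E u v \<longrightarrow> \<kappa> u \<noteq> \<kappa> v)"

text \<open>The chromatic symmetric function X_G, represented by its coefficient function:
  the coefficient of the monomial \<Prod>_c x_c^(\<alpha> c) is the number of proper colourings \<kappa>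
  with \<prod>_v x_(\<kappa> v) equal to that monomial.\<close>
definition csf :: "'a set \<Rightarrow> 'a set set \<Rightarrow> (nat \<Rightarrow> nat) \<Rightarrow> int" where
  "csf V E \<alpha> = int (card {\<kappa>. proper_coloring V E \<kappa> \<and> (\<forall>c. card {v \<in> V. \<kappa> v = c} = \<alpha> c)})"

definition remove_edges_to :: "'a set set \<Rightarrow> 'a \<Rightarrow> 'a set \<Rightarrow> 'a set set" where
  "remove_edges_to E x S = E - {{x, v} | v. v \<in> S}"

end

(* Let G be H with all edges between x and K removed. A colouring of type alpha of H_S
   is a colouring of G in which no vertex of K - S gets the colour of x. As K is a clique
   of G, at most one vertex of K gets that colour, so the coefficient of X_(H_S) is c plus
   the sum over v in S of b_v, where c counts the colourings of G in which no vertex of K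
   gets the colour of x and b_v those in which v does. The vertices of K are twins in G,
   so transposing two of them is an automorphism of G, and b_v does not depend on v.
   The coefficient is therefore affine in |S|, and every affine f satisfies
   (i - j) f(k) + (j - k) f(i) + (k - i) f(j) = 0. *)

theory Submission
  imports Defs "HOL-Combinatorics.Permutations"
begin

definition colorings_of_type :: "'a set \<Rightarrow> 'a set set \<Rightarrow> (nat \<Rightarrow> nat) \<Rightarrow> ('a \<Rightarrow> nat) set" where
  "colorings_of_type V E \<alpha> = {\<kappa>. proper_coloring V E \<kappa> \<and> (\<forall>c. card {v \<in> V. \<kappa> v = c} = \<alpha> c)}"

lemma csf_eq_card_colorings_of_type: "csf V E \<alpha> = int (card (colorings_of_type V E \<alpha>))"
  unfolding csf_def colorings_of_type_def ..

lemma adj_sym: "adj E u v \<longleftrightarrow> adj E v u"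
  unfolding adj_def by (auto simp: insert_commute)

lemma adj_imp_vertices:
  assumes "simple_graph V E" "adj E u v"
  shows "u \<in> V" "v \<in> V"
  using assms unfolding simple_graph_def adj_def by (auto simp: doubleton_eq_iff)

lemma adj_remove_edges_to:
  "adj (remove_edges_to E x S) a b \<longleftrightarrow> adj E a b \<and> \<not> (a = x \<and> b \<in> S) \<and> \<not> (b = x \<and> a \<in> S)"
  unfolding adj_def remove_edges_to_def by (auto simp: doubleton_eq_iff)

lemma finite_colorings_of_type:
  assumes "finite V"
  shows "finite (colorings_of_type V E \<alpha>)"
proof (cases "colorings_of_type V E \<alpha> = {}")
  case False
  then obtain \<kappa>\<^sub>0 where \<kappa>\<^sub>0: "\<kappa>\<^sub>0 \<in> colorings_of_type V E \<alpha>" by blast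
  have "colorings_of_type V E \<alpha> \<subseteq> PiE V (\<lambda>_. \<kappa>\<^sub>0 ` V)"
  proof
    fix \<kappa> assume \<kappa>: "\<kappa> \<in> colorings_of_type V E \<alpha>"
    have "\<kappa> u \<in> \<kappa>\<^sub>0 ` V" if "u \<in> V" for u
    proof -
      \<comment> \<open>All colourings of type \<open>\<alpha>\<close> use the same set of colours.\<close>
      have "0 < card {v \<in> V. \<kappa> v = \<kappa> u}"
        using that assms by (subst card_gt_0_iff) auto
      then have "0 < card {v \<in> V. \<kappa>\<^sub>0 v = \<kappa> u}"
        using \<kappa> \<kappa>\<^sub>0 unfolding colorings_of_type_def by simp
      then show ?thesis by (force simp: card_gt_0_iff)
    qed
    with \<kappa> show "\<kappa> \<in> PiE V (\<lambda>_. \<kappa>\<^sub>0 ` V)"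
      unfolding colorings_of_type_def proper_coloring_def by (auto simp: PiE_iff)
  qed
  then show ?thesis
    by (rule finite_subset) (simp add: finite_PiE assms)
qed simp

lemma card_fibre_comp_permutes:
  assumes "\<sigma> permutes V"
  shows "card {u \<in> V. \<kappa> (\<sigma> u) = c} = card {u \<in> V. \<kappa> u = c}"
proof -
  have "{u \<in> V. \<kappa> (\<sigma> u) = c} = \<sigma> -` {u \<in> V. \<kappa> u = c}"
    using permutes_in_image[OF assms] by auto
  also have "card \<dots> = card {u \<in> V. \<kappa> u = c}"
    using permutes_bij[OF assms] by (intro card_vimage_inj) (auto simp: bij_def)
  finally show ?thesis .
qed

lemma colorings_of_type_comp_automorphism:
  assumes \<sigma>: "\<sigma> permutes V" and hom: "\<And>a b. adj E a b \<Longrightarrow> adj E (\<sigma> a) (\<sigma> b)"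
    and \<kappa>: "\<kappa> \<in> colorings_of_type V E \<alpha>"
  shows "\<kappa> \<circ> \<sigma> \<in> colorings_of_type V E \<alpha>"
proof -
  have "card {v \<in> V. \<kappa> (\<sigma> v) = c} = \<alpha> c" for c
    using \<kappa> card_fibre_comp_permutes[OF \<sigma>, of \<kappa> c] unfolding colorings_of_type_def by simp
  then show ?thesis
    using \<kappa> hom permutes_not_in[OF \<sigma>] permutes_in_image[OF \<sigma>]
    unfolding colorings_of_type_def proper_coloring_def extensional_def by auto
qed

definition twins :: "'a set set \<Rightarrow> 'a \<Rightarrow> 'a \<Rightarrow> bool" where
  "twins E v w \<longleftrightarrow> (\<forall>u. u \<noteq> v \<longrightarrow> u \<noteq> w \<longrightarrow> (adj E u v \<longleftrightarrow> adj E u w))"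

lemma adj_transpose_twins:
  assumes "twins E v w" "adj E a b"
  shows "adj E (Transposition.transpose v w a) (Transposition.transpose v w b)"
proof -
  have adj_transpose_one_end: "adj E (Transposition.transpose v w p) q" if "adj E p q" "q \<noteq> v" "q \<noteq> w" for p q
  proof (cases "p = v \<or> p = w")
    case True
    with that assms(1) have "adj E q (Transposition.transpose v w p)"
      unfolding twins_def by (auto simp: adj_sym[of E p q])
    then show ?thesis
      by (simp add: adj_sym)
  next
    case False
    with that(1) show ?thesis by simp
  qed
  have "a \<noteq> b"
    using assms(2) by (simp add: adj_def)
  then consider "b \<noteq> v" "b \<noteq> w" | "a \<noteq> v" "a \<noteq> w" | "{a, b} = {v, w}"
    by blast
  then show ?thesis
  proof cases
    case 1
    with assms(2) show ?thesis by (simp add: adj_transpose_one_end)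
  next
    case 2
    with assms(2) adj_transpose_one_end[of b a] show ?thesis by (simp add: adj_sym)
  next
    case 3
    with assms(2) \<open>a \<noteq> b\<close> show ?thesis by (auto simp: doubleton_eq_iff adj_sym)
  qed
qed

lemma card_colorings_of_type_same_color_twins:
  assumes "twins E v w" "v \<in> V" "w \<in> V" "x \<noteq> v" "x \<noteq> w"
  shows "card {\<kappa> \<in> colorings_of_type V E \<alpha>. \<kappa> v = \<kappa> x}
       = card {\<kappa> \<in> colorings_of_type V E \<alpha>. \<kappa> w = \<kappa> x}"
proof -
  let ?t = "Transposition.transpose v w"
  have t: "?t permutes V"
    using assms(2,3) by (rule permutes_swap_id)
  have "bij_betw (\<lambda>\<kappa>. \<kappa> \<circ> ?t) {\<kappa> \<in> colorings_of_type V E \<alpha>. \<kappa> v = \<kappa> x}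
                                 {\<kappa> \<in> colorings_of_type V E \<alpha>. \<kappa> w = \<kappa> x}"
    by (rule bij_betw_byWitness[where f' = "\<lambda>\<kappa>. \<kappa> \<circ> ?t"])
      (use assms(4,5) in \<open>auto simp: comp_assoc
        intro: colorings_of_type_comp_automorphism[OF t adj_transpose_twins[OF assms(1)]]\<close>)
  then show ?thesis
    by (rule bij_betw_same_card)
qed

lemma card_avoiding_complement:
  assumes "finite T" "finite S" "S \<subseteq> K"
    and unique: "\<And>\<kappa> v w. \<kappa> \<in> T \<Longrightarrow> v \<in> K \<Longrightarrow> w \<in> K \<Longrightarrow> P \<kappa> v \<Longrightarrow> P \<kappa> w \<Longrightarrow> v = w"
  shows "card {\<kappa> \<in> T. \<forall>v \<in> K - S. \<not> P \<kappa> v}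
       = card {\<kappa> \<in> T. \<forall>v \<in> K. \<not> P \<kappa> v} + (\<Sum>v \<in> S. card {\<kappa> \<in> T. P \<kappa> v})"
proof -
  have "{\<kappa> \<in> T. \<forall>v \<in> K - S. \<not> P \<kappa> v}
      = {\<kappa> \<in> T. \<forall>v \<in> K. \<not> P \<kappa> v} \<union> (\<Union>v \<in> S. {\<kappa> \<in> T. P \<kappa> v})"
    using assms(3) unique by blast
  also have "card \<dots> = card {\<kappa> \<in> T. \<forall>v \<in> K. \<not> P \<kappa> v} + card (\<Union>v \<in> S. {\<kappa> \<in> T. P \<kappa> v})"
    using assms(1-3) by (intro card_Un_disjoint) auto
  also have "card (\<Union>v \<in> S. {\<kappa> \<in> T. P \<kappa> v}) = (\<Sum>v \<in> S. card {\<kappa> \<in> T. P \<kappa> v})"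
    by (intro card_UN_disjoint) (use assms in \<open>simp_all, blast\<close>)
  finally show ?thesis .
qed

lemma proper_coloring_remove_edges_to_iff:
  assumes "S \<subseteq> K" "K \<subseteq> V" "x \<in> V" "\<forall>v \<in> K. adj E x v"
  shows "proper_coloring V (remove_edges_to E x S) \<kappa> \<longleftrightarrow>
    proper_coloring V (remove_edges_to E x K) \<kappa> \<and> (\<forall>v \<in> K - S. \<kappa> v \<noteq> \<kappa> x)"
proof -
  have edges: "adj (remove_edges_to E x S) a b \<longleftrightarrow>
      adj (remove_edges_to E x K) a b \<or> (a = x \<and> b \<in> K - S) \<or> (b = x \<and> a \<in> K - S)" for a b
    using assms(1,4) adj_sym[of E] unfolding adj_remove_edges_to by blast
  show ?thesis
  proof
    assume proper: "proper_coloring V (remove_edges_to E x S) \<kappa>"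
    have "\<kappa> v \<noteq> \<kappa> x" if "v \<in> K - S" for v
    proof -
      have "adj (remove_edges_to E x S) v x"
        using edges that by blast
      with proper that assms(2,3) show ?thesis
        unfolding proper_coloring_def by blast
    qed
    moreover have "proper_coloring V (remove_edges_to E x K) \<kappa>"
      using proper edges unfolding proper_coloring_def by blast
    ultimately show "proper_coloring V (remove_edges_to E x K) \<kappa> \<and> (\<forall>v \<in> K - S. \<kappa> v \<noteq> \<kappa> x)"
      by blast
  next
    assume "proper_coloring V (remove_edges_to E x K) \<kappa> \<and> (\<forall>v \<in> K - S. \<kappa> v \<noteq> \<kappa> x)"
    then show "proper_coloring V (remove_edges_to E x S) \<kappa>"
      unfolding proper_coloring_def edges by (metis Diff_iff)
  qed
qed

lemma colorings_of_type_remove_edges_to: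
  assumes "S \<subseteq> K" "K \<subseteq> V" "x \<in> V" "\<forall>v \<in> K. adj E x v"
  shows "colorings_of_type V (remove_edges_to E x S) \<alpha>
       = {\<kappa> \<in> colorings_of_type V (remove_edges_to E x K) \<alpha>. \<forall>v \<in> K - S. \<kappa> v \<noteq> \<kappa> x}"
  using proper_coloring_remove_edges_to_iff[OF assms] unfolding colorings_of_type_def by auto

lemma adj_iff_mem_closed_nbhd_del_vertex:
  assumes "u \<in> V" "u \<noteq> v" "u \<noteq> x" "v \<noteq> x"
  shows "adj E u v \<longleftrightarrow> u \<in> closed_nbhd (V - {x}) (del_vertex_E E x) v"
  using assms unfolding closed_nbhd_def del_vertex_E_def adj_def by auto

lemma twins_remove_edges_to:
  assumes "simple_graph V E" "x \<notin> K" "v \<in> K" "w \<in> K"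
    and "closed_nbhd (V - {x}) (del_vertex_E E x) v = closed_nbhd (V - {x}) (del_vertex_E E x) w"
  shows "twins (remove_edges_to E x K) v w"
  unfolding twins_def
proof (intro allI impI)
  fix u assume "u \<noteq> v" "u \<noteq> w"
  consider "u \<in> V" "u \<noteq> x" | "u = x" | "u \<notin> V"
    by blast
  then show "adj (remove_edges_to E x K) u v \<longleftrightarrow> adj (remove_edges_to E x K) u w"
  proof cases
    case 1
    have "v \<noteq> x" "w \<noteq> x"
      using assms(2-4) by auto
    moreover from this 1 \<open>u \<noteq> v\<close> \<open>u \<noteq> w\<close> have "adj E u v \<longleftrightarrow> adj E u w"
      using assms(5) by (simp add: adj_iff_mem_closed_nbhd_del_vertex)
    ultimately show ?thesis
      using 1 by (simp add: adj_remove_edges_to)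
  next
    case 2
    with assms(3,4) show ?thesis
      by (simp add: adj_remove_edges_to)
  next
    case 3
    with assms(1) show ?thesis
      by (auto simp: adj_remove_edges_to dest: adj_imp_vertices)
  qed
qed

lemma card_colorings_remove_edges_to_same_color:
  assumes "simple_graph V E" "K \<subseteq> V" "x \<notin> K" "v \<in> K" "w \<in> K"
    and "\<forall>u \<in> K. \<forall>v \<in> K. closed_nbhd (V - {x}) (del_vertex_E E x) u
                        = closed_nbhd (V - {x}) (del_vertex_E E x) v"
  shows "card {\<kappa> \<in> colorings_of_type V (remove_edges_to E x K) \<alpha>. \<kappa> v = \<kappa> x}
       = card {\<kappa> \<in> colorings_of_type V (remove_edges_to E x K) \<alpha>. \<kappa> w = \<kappa> x}"
proof -
  have "twins (remove_edges_to E x K) v w"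
    using assms(4-6) by (intro twins_remove_edges_to[OF assms(1,3-5)]) blast
  then show ?thesis
    using assms(2-5) by (intro card_colorings_of_type_same_color_twins) auto
qed

lemma clique_vertices_eq_if_same_color:
  assumes "is_clique V E K" "x \<notin> K" "\<kappa> \<in> colorings_of_type V (remove_edges_to E x K) \<alpha>"
    and "v \<in> K" "w \<in> K" "\<kappa> v = \<kappa> w"
  shows "v = w"
proof (rule ccontr)
  assume "v \<noteq> w"
  then have "adj (remove_edges_to E x K) v w"
    using assms(1,2,4,5) unfolding is_clique_def adj_remove_edges_to by auto
  with assms(1,3-6) show False
    unfolding is_clique_def colorings_of_type_def proper_coloring_def by blast
qed

lemma csf_remove_edges_to_affine:
  assumes "simple_graph V E" "is_clique V E K" "x \<in> V" "x \<notin> K" "\<forall>v \<in> K. adj E x v"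
    and "\<forall>u \<in> K. \<forall>v \<in> K. closed_nbhd (V - {x}) (del_vertex_E E x) u
                        = closed_nbhd (V - {x}) (del_vertex_E E x) v"
  obtains c b where "\<And>S. S \<subseteq> K \<Longrightarrow> csf V (remove_edges_to E x S) \<alpha> = c + int (card S) * b"
proof -
  define G where "G = remove_edges_to E x K"
  define T where "T = colorings_of_type V G \<alpha>"
  have KV: "K \<subseteq> V" and finV: "finite V"
    using assms(1,2) unfolding is_clique_def simple_graph_def by auto
  have finT: "finite T"
    unfolding T_def using finV by (rule finite_colorings_of_type)
  obtain b where b: "\<And>v. v \<in> K \<Longrightarrow> card {\<kappa> \<in> T. \<kappa> v = \<kappa> x} = b"
  proof (cases "K = {}")
    case False
    then obtain v\<^sub>0 where "v\<^sub>0 \<in> K" by blast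
    show thesis
    proof (rule that)
      fix v assume "v \<in> K"
      show "card {\<kappa> \<in> T. \<kappa> v = \<kappa> x} = card {\<kappa> \<in> T. \<kappa> v\<^sub>0 = \<kappa> x}"
        unfolding T_def G_def
        by (rule card_colorings_remove_edges_to_same_color
            [OF assms(1) KV assms(4) \<open>v \<in> K\<close> \<open>v\<^sub>0 \<in> K\<close> assms(6)])
    qed
  qed simp
  have unique: "v = w" if "\<kappa> \<in> T" "v \<in> K" "w \<in> K" "\<kappa> v = \<kappa> x" "\<kappa> w = \<kappa> x" for \<kappa> v w
    using that(4,5)
    by (intro clique_vertices_eq_if_same_color[OF assms(2,4) that(1)[unfolded T_def G_def] that(2,3)])
      simp
  define c where "c = card {\<kappa> \<in> T. \<forall>v \<in> K. \<kappa> v \<noteq> \<kappa> x}"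
  show thesis
  proof (rule that[of "int c" "int b"])
    fix S assume "S \<subseteq> K"
    then have "finite S"
      using KV finV by (meson finite_subset)
    have "csf V (remove_edges_to E x S) \<alpha> = int (card {\<kappa> \<in> T. \<forall>v \<in> K - S. \<kappa> v \<noteq> \<kappa> x})"
      unfolding csf_eq_card_colorings_of_type T_def G_def
      using colorings_of_type_remove_edges_to[OF \<open>S \<subseteq> K\<close> KV assms(3,5)] by simp
    also have "\<dots> = int c + int (card S) * int b"
      using card_avoiding_complement[OF finT \<open>finite S\<close> \<open>S \<subseteq> K\<close> unique] b \<open>S \<subseteq> K\<close>
      unfolding c_def by (simp add: subset_eq)
    finally show "csf V (remove_edges_to E x S) \<alpha> = int c + int (card S) * int b" .
  qed
qed

theorem corollary2p4:
  fixes V :: "'a set" and E :: "'a set set" and K :: "'a set" and x :: 'a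
    and i j k :: nat and Si Sj Sk :: "'a set"
  assumes "simple_graph V E"
    and "is_clique V E K"
    and "x \<in> V" and "x \<notin> K"
    and "\<forall>v\<in>K. adj E x v"
    and "\<forall>u\<in>K. \<forall>v\<in>K. closed_nbhd (V - {x}) (del_vertex_E E x) u
                        = closed_nbhd (V - {x}) (del_vertex_E E x) v"
    and "i \<le> j" and "j \<le> k" and "k \<le> card K"
    and "Si \<subseteq> K" and "card Si = i"
    and "Sj \<subseteq> K" and "card Sj = j"
    and "Sk \<subseteq> K" and "card Sk = k"
  shows "\<forall>\<alpha>. (int i - int j) * csf V (remove_edges_to E x Sk) \<alpha>
            + (int j - int k) * csf V (remove_edges_to E x Si) \<alpha>
            + (int k - int i) * csf V (remove_edges_to E x Sj) \<alpha> = 0"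
proof (rule allI, goal_cases)
  case (1 \<alpha>)
  obtain c b where affine: "\<And>S. S \<subseteq> K \<Longrightarrow> csf V (remove_edges_to E x S) \<alpha> = c + int (card S) * b"
    using csf_remove_edges_to_affine[OF assms(1-6)] by blast
  show ?case
    using assms(10-15) by (simp add: affine algebra_simps)
qed

end
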